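(* Let $B\ge1$, $G=\{0,\frac1B,\dots,1\}$, $t\in G$ and $\eta\in(0,t)$. Any $f^*\in\mathcal U_\eta$ that maximises $\mathcal T_t$ over $\mathcal U_\eta$ satisfies: (i) $\mathcal E(f^* )=\eta$; (ii) writing $i_M:=B\max(\mathrm{supp}(f^* ))$, either (a) $f^*_0>f^*_1=f^*_2=\dots=f^*_{i_M-1}\ge f^*_{i_M}$, or (b) $i_M=Bt$ and $f^*_0=f^*_1=\dots=f^*_{i_M-1}\le f^*_{i_M}$.
   Context: Identify a probability mass function $f$ on $G$ with $(f_0,\dots,f_B)$, $f_i=f(i/B)$. Let $\mathcal T_t(f)=\sum_{i\ge Bt}f_i$, $\mathcal E(f)=\sum_{i=1}^B\frac iBf_i$ and $\mathrm{supp}(f)=\{i/B\in G:f_i>0\}$. $f$ is unimodal if there is $m$ with $f_0\le\dots\le f_m$ and $f_m\ge\dots\ge f_B$. $\mathcal U$ is the set of unimodal probability mass functions on $G$ and $\mathcal U_\eta=\{f\in\mathcal U:\mathcal E(f)\le\eta\}$. *)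

theory Defs
  imports Main "HOL.Real"
begin

text \<open>A probability mass function on the grid G = {0, 1/B, ..., 1} is identified
  with its vector of weights (f 0, ..., f B), f i = f(i/B); we represent it as a
  function on nat that vanishes outside {0..B}.\<close>

definition grid :: "nat \<Rightarrow> real set" where
  "grid B = {real i / real B | i. i \<le> B}"

definition is_pmf_G :: "nat \<Rightarrow> (nat \<Rightarrow> real) \<Rightarrow> bool" where
  "is_pmf_G B f \<longleftrightarrow> (\<forall>i\<le>B. 0 \<le> f i) \<and> (\<forall>i>B. f i = 0) \<and> (\<Sum>i=0..B. f i) = 1"

definition tailmass :: "nat \<Rightarrow> real \<Rightarrow> (nat \<Rightarrow> real) \<Rightarrow> real" where
  "tailmass B t f = (\<Sum>i\<in>{i. i \<le> B \<and> real B * t \<le> real i}. f i)"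

definition expect :: "nat \<Rightarrow> (nat \<Rightarrow> real) \<Rightarrow> real" where
  "expect B f = (\<Sum>i=1..B. (real i / real B) * f i)"

definition supp_idx :: "nat \<Rightarrow> (nat \<Rightarrow> real) \<Rightarrow> nat set" where
  "supp_idx B f = {i. i \<le> B \<and> 0 < f i}"

definition unimodal :: "nat \<Rightarrow> (nat \<Rightarrow> real) \<Rightarrow> bool" where
  "unimodal B f \<longleftrightarrow> (\<exists>m\<le>B. (\<forall>i j. i \<le> j \<and> j \<le> m \<longrightarrow> f i \<le> f j)
                            \<and> (\<forall>i j. m \<le> i \<and> i \<le> j \<and> j \<le> B \<longrightarrow> f j \<le> f i))"

definition U :: "nat \<Rightarrow> (nat \<Rightarrow> real) set" where
  "U B = {f. is_pmf_G B f \<and> unimodal B f}"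

definition U_eta :: "nat \<Rightarrow> real \<Rightarrow> (nat \<Rightarrow> real) set" where
  "U_eta B \<eta> = {f \<in> U B. expect B f \<le> \<eta>}"

end

theory Submission
  imports Defs
begin

text \<open>If the expectation of a unimodal distribution f is below \<eta>, mixing f with the uniform
  distribution on its largest mode and all points to the right of it keeps unimodality and
  strictly increases the tail mass. Hence a maximiser has expectation exactly \<eta>, and it has the
  least expectation among all unimodal distributions with at least its tail mass. So no unimodal
  distribution arises from it by moving mass to a smaller index on one side of the threshold
  index k = B t: such a move keeps the tail mass and lowers the expectation. Every deviation from
  the shapes (a) and (b) admits such a unimodality-preserving move.\<close>

definition is_mode :: "nat \<Rightarrow> (nat \<Rightarrow> real) \<Rightarrow> nat \<Rightarrow> bool" where
  "is_mode B f m \<longleftrightarrow> m \<le> B \<and> (\<forall>i j. i \<le> j \<and> j \<le> m \<longrightarrow> f i \<le> f j)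
                            \<and> (\<forall>i j. m \<le> i \<and> i \<le> j \<and> j \<le> B \<longrightarrow> f j \<le> f i)"

lemma unimodal_iff_is_mode: "unimodal B f \<longleftrightarrow> (\<exists>m. is_mode B f m)"
  unfolding unimodal_def is_mode_def by blast

lemma is_modeI:
  fixes f :: "nat \<Rightarrow> real"
  assumes "m \<le> B" "\<And>i. i < m \<Longrightarrow> f i \<le> f (Suc i)"
    "\<And>i. m \<le> i \<Longrightarrow> i < B \<Longrightarrow> f (Suc i) \<le> f i"
  shows "is_mode B f m"
  unfolding is_mode_def
proof (intro conjI allI impI)
  fix i j assume "i \<le> j \<and> j \<le> m"
  then show "f i \<le> f j"
    using lift_Suc_mono_le_ivl[of "{i..<j}" f i j] assms(2) by auto
next
  fix i j assume "m \<le> i \<and> i \<le> j \<and> j \<le> B"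
  then show "f j \<le> f i"
    using lift_Suc_antimono_le_ivl[of "{i..<j}" f i j] assms(3) by auto
qed (fact assms(1))

lemma is_mode_le: "is_mode B f m \<Longrightarrow> m \<le> B"
  unfolding is_mode_def by simp

lemma is_mode_mono_before: "is_mode B f m \<Longrightarrow> i < m \<Longrightarrow> f i \<le> f (Suc i)"
  unfolding is_mode_def by simp

lemma is_mode_antimono_after: "is_mode B f m \<Longrightarrow> m \<le> i \<Longrightarrow> i < B \<Longrightarrow> f (Suc i) \<le> f i"
  unfolding is_mode_def by simp

lemma is_mode_max: "is_mode B f m \<Longrightarrow> i \<le> B \<Longrightarrow> f i \<le> f m"
  unfolding is_mode_def by (cases "i \<le> m") auto

lemma is_mode_if_eq_max:
  assumes mode: "is_mode B f m" and "j \<le> B" "f j = f m"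
  shows "is_mode B f j"
proof (rule is_modeI)
  fix i assume "i < j"
  show "f i \<le> f (Suc i)"
  proof (cases "Suc i \<le> m")
    case False
    then have "f j \<le> f (Suc i)" using mode \<open>i < j\<close> assms(2) unfolding is_mode_def by auto
    moreover have "f i \<le> f m" using is_mode_max[OF mode, of i] \<open>i < j\<close> assms(2) by simp
    ultimately show ?thesis using assms(3) by simp
  qed (use mode in \<open>auto simp: is_mode_def\<close>)
next
  fix i assume "j \<le> i" "i < B"
  show "f (Suc i) \<le> f i"
  proof (cases "m \<le> i")
    case False
    then have "f j \<le> f i" using mode \<open>j \<le> i\<close> unfolding is_mode_def by auto
    moreover have "f (Suc i) \<le> f m" using is_mode_max[OF mode, of "Suc i"] \<open>i < B\<close> by simp
    ultimately show ?thesis using assms(3) by simp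
  qed (use mode \<open>i < B\<close> in \<open>auto simp: is_mode_def\<close>)
qed fact

lemma largest_mode_exists:
  assumes "unimodal B f"
  obtains m where "is_mode B f m" "\<And>m'. is_mode B f m' \<Longrightarrow> m' \<le> m"
proof -
  let ?M = "{m. is_mode B f m}"
  have "finite ?M" by (rule finite_subset[of _ "{..B}"]) (auto simp: is_mode_def)
  moreover have "?M \<noteq> {}" using assms unimodal_iff_is_mode by auto
  ultimately show ?thesis using Max_in Max_ge that by (metis mem_Collect_eq)
qed

lemma largest_mode_strict_drop:
  assumes mode: "is_mode B f m" and largest: "\<And>m'. is_mode B f m' \<Longrightarrow> m' \<le> m" and "m < B"
  shows "f (Suc m) < f m"
proof -
  have "f (Suc m) \<noteq> f m"
    using is_mode_if_eq_max[OF mode, of "Suc m"] largest[of "Suc m"] \<open>m < B\<close> by auto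
  then show ?thesis using is_mode_antimono_after[OF mode le_refl \<open>m < B\<close>] by simp
qed

lemma eq_if_Suc_steps_eq:
  fixes f :: "nat \<Rightarrow> real"
  assumes "\<And>j. a \<le> j \<Longrightarrow> Suc j < n \<Longrightarrow> f j = f (Suc j)" and "a \<le> i" "i < n"
  shows "f i = f a"
  using lift_Suc_mono_le_ivl[of "{a..<i}" f a i] lift_Suc_antimono_le_ivl[of "{a..<i}" f a i] assms
  by fastforce

lemma is_pmf_G_nonneg: "is_pmf_G B f \<Longrightarrow> 0 \<le> f i"
  unfolding is_pmf_G_def by (cases "i \<le> B") auto

lemma is_mode_pos:
  assumes pmf: "is_pmf_G B f" and mode: "is_mode B f m"
  shows "0 < f m"
proof (rule ccontr)
  assume "\<not> 0 < f m"
  then have "sum f {0..B} \<le> 0" using is_mode_max[OF mode] by (intro sum_nonpos) fastforce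
  then show False using pmf unfolding is_pmf_G_def by simp
qed

lemma expect_eq_sum_from_0: "expect B f = (\<Sum>i=0..B. real i / real B * f i)"
  unfolding expect_def by (cases B) (simp_all add: sum.atLeast_Suc_atMost)

lemma tailmass_eq_sum: "real k = real B * t \<Longrightarrow> tailmass B t f = sum f {k..B}"
  unfolding tailmass_def by (rule sum.cong) auto

lemma expect_nonneg: "is_pmf_G B f \<Longrightarrow> 0 \<le> expect B f"
  unfolding expect_def by (intro sum_nonneg mult_nonneg_nonneg) (auto simp: is_pmf_G_nonneg)

lemma expect_le_1:
  assumes "is_pmf_G B f"
  shows "expect B f \<le> 1"
proof -
  have "expect B f \<le> (\<Sum>i=0..B. f i)"
    unfolding expect_eq_sum_from_0
  proof (rule sum_mono)
    fix i assume "i \<in> {0..B}"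
    then have "real i / real B \<le> 1" by (cases "B = 0") auto
    then show "real i / real B * f i \<le> f i"
      using is_pmf_G_nonneg[OF assms, of i] mult_right_mono by fastforce
  qed
  then show ?thesis using assms unfolding is_pmf_G_def by simp
qed

lemma threshold_mul_tail_le_expect:
  assumes pmf: "is_pmf_G B f" and k: "real k = real B * t" "1 \<le> k" and "B \<ge> 1"
  shows "t * sum f {k..B} \<le> expect B f"
proof -
  have "t * sum f {k..B} = (\<Sum>i=k..B. real k / real B * f i)"
    using k \<open>B \<ge> 1\<close> by (simp add: sum_distrib_left)
  also have "\<dots> \<le> (\<Sum>i=k..B. real i / real B * f i)"
    by (rule sum_mono) (auto intro!: mult_right_mono divide_right_mono simp: is_pmf_G_nonneg[OF pmf])
  also have "\<dots> \<le> (\<Sum>i=1..B. real i / real B * f i)"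
    by (rule sum_mono2) (use k in \<open>auto intro!: mult_nonneg_nonneg simp: is_pmf_G_nonneg[OF pmf]\<close>)
  finally show ?thesis unfolding expect_def .
qed

subsection \<open>Raising the tail mass\<close>

definition mix :: "real \<Rightarrow> (nat \<Rightarrow> real) \<Rightarrow> (nat \<Rightarrow> real) \<Rightarrow> nat \<Rightarrow> real" where
  "mix l f g = (\<lambda>i. (1 - l) * f i + l * g i)"

lemma sum_mix: "(\<Sum>i\<in>A. c i * mix l f g i) = (1 - l) * (\<Sum>i\<in>A. c i * f i) + l * (\<Sum>i\<in>A. c i * g i)"
proof -
  have "(\<Sum>i\<in>A. c i * mix l f g i) = (\<Sum>i\<in>A. (1 - l) * (c i * f i) + l * (c i * g i))"
    unfolding mix_def by (simp add: algebra_simps)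
  then show ?thesis by (simp add: sum.distrib sum_distrib_left)
qed

lemma is_pmf_G_mix:
  assumes "is_pmf_G B f" "is_pmf_G B g" "0 \<le> l" "l \<le> 1"
  shows "is_pmf_G B (mix l f g)"
  using assms sum_mix[where c="\<lambda>_. 1" and l=l and f=f and g=g]
  by (auto simp: is_pmf_G_def mix_def intro!: add_nonneg_nonneg mult_nonneg_nonneg)

lemma is_mode_mix:
  assumes "is_mode B f m" "is_mode B g m" "0 \<le> l" "l \<le> 1"
  shows "is_mode B (mix l f g) m"
  using assms unfolding is_mode_def mix_def by (auto intro!: add_mono mult_left_mono)

lemma expect_mix: "expect B (mix l f g) = (1 - l) * expect B f + l * expect B g"
  unfolding expect_def by (rule sum_mix)

lemma tailmass_mix: "tailmass B t (mix l f g) = (1 - l) * tailmass B t f + l * tailmass B t g"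
  unfolding tailmass_def using sum_mix[of "\<lambda>_. 1"] by simp

definition uniform_from :: "nat \<Rightarrow> nat \<Rightarrow> nat \<Rightarrow> real" where
  "uniform_from B m i = (if m \<le> i \<and> i \<le> B then 1 / real (Suc B - m) else 0)"

lemma sum_uniform_from:
  assumes "m \<le> j"
  shows "sum (uniform_from B m) {j..B} = real (Suc B - j) / real (Suc B - m)"
proof -
  have "sum (uniform_from B m) {j..B} = sum (\<lambda>_. 1 / real (Suc B - m)) {j..B}"
    using assms by (intro sum.cong) (auto simp: uniform_from_def)
  then show ?thesis by simp
qed

lemma is_pmf_G_uniform_from:
  assumes "m \<le> B"
  shows "is_pmf_G B (uniform_from B m)"
proof -
  have "sum (uniform_from B m) {0..B} = sum (uniform_from B m) {m..B}"
    by (rule sum.mono_neutral_right) (auto simp: uniform_from_def)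
  then show ?thesis
    using sum_uniform_from[of m m B] assms by (simp add: is_pmf_G_def uniform_from_def)
qed

lemma is_mode_uniform_from: "m \<le> B \<Longrightarrow> is_mode B (uniform_from B m) m"
  by (rule is_modeI) (auto simp: uniform_from_def)

lemma tail_less_uniform_share:
  assumes pmf: "is_pmf_G B f" and mode: "is_mode B f m" and drop: "f (Suc m) < f m"
    and "m < k" "k \<le> B"
  shows "sum f {k..B} < real (Suc B - k) / real (Suc B - m)"
proof -
  txt \<open>f is non-increasing from m on and f m > f k, so its average over {m..<k} exceeds f k,
    which bounds its average over {k..B}.\<close>
  define T where "T = sum f {k..B}"
  define S where "S = sum f {m..<k}"
  define a where "a = real (Suc B - k)"
  define b where "b = real (k - m)"
  have decr: "f j \<le> f i" if "m \<le> i" "i \<le> j" "j \<le> B" for i j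
    using mode that unfolding is_mode_def by auto
  have "T \<le> sum (\<lambda>_. f k) {k..B}"
    unfolding T_def by (rule sum_mono) (use decr[of k] \<open>m < k\<close> in auto)
  then have T_le: "T \<le> a * f k" unfolding a_def by simp
  have "sum (\<lambda>_. f k) {m..<k} < S"
    unfolding S_def
  proof (rule sum_strict_mono_ex1)
    show "\<forall>i\<in>{m..<k}. f k \<le> f i" using decr \<open>k \<le> B\<close> by auto
    show "\<exists>i\<in>{m..<k}. f k < f i"
      using drop decr[of "Suc m" k] \<open>m < k\<close> \<open>k \<le> B\<close> by (intro bexI[of _ m]) auto
  qed auto
  then have S_gt: "b * f k < S" unfolding b_def by simp
  have "{m..B} = {m..<k} \<union> {k..B}" using \<open>m < k\<close> \<open>k \<le> B\<close> by auto
  then have "S + T = sum f {m..B}" unfolding S_def T_def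
    by (simp add: sum.union_disjoint ivl_disj_int)
  also have "\<dots> \<le> sum f {0..B}" by (rule sum_mono2) (auto simp: is_pmf_G_nonneg[OF pmf])
  finally have ST: "S + T \<le> 1" using pmf unfolding is_pmf_G_def by simp
  have a: "1 \<le> a" and b: "1 \<le> b" unfolding a_def b_def using \<open>m < k\<close> \<open>k \<le> B\<close> by auto
  have "T * b \<le> a * f k * b" using T_le b by (simp add: mult_right_mono)
  moreover have "a * (b * f k) < a * S" using S_gt a by simp
  moreover have "a * (T + S) \<le> a" using ST a by (simp add: mult_left_le)
  ultimately have "T * (a + b) < a" by (simp add: algebra_simps)
  then have "T < a / (a + b)" using a b by (simp add: field_simps)
  moreover have "real (Suc B - m) = a + b" unfolding a_def b_def using \<open>m < k\<close> \<open>k \<le> B\<close> by simp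
  ultimately show ?thesis unfolding T_def a_def by simp
qed

lemma tail_less_uniform_from_largest_mode:
  assumes pmf: "is_pmf_G B f" and mode: "is_mode B f m" and largest: "\<And>m'. is_mode B f m' \<Longrightarrow> m' \<le> m"
    and k: "real k = real B * t" "1 \<le> k" "k \<le> B" and "B \<ge> 1" and "expect B f < t"
  shows "sum f {k..B} < sum (uniform_from B m) {k..B}"
proof (cases "k \<le> m")
  case True
  have "sum (uniform_from B m) {k..B} = sum (uniform_from B m) {m..B}"
    using True by (intro sum.mono_neutral_right) (auto simp: uniform_from_def)
  also have "\<dots> = 1" using sum_uniform_from[of m m B] is_mode_le[OF mode] by simp
  finally have "sum (uniform_from B m) {k..B} = 1" .
  moreover have "t * sum f {k..B} < t * 1"
    using threshold_mul_tail_le_expect[OF pmf k(1,2) \<open>B \<ge> 1\<close>] \<open>expect B f < t\<close> by simp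
  ultimately show ?thesis using \<open>expect B f < t\<close> expect_nonneg[OF pmf] by simp
next
  case False
  then have "f (Suc m) < f m" using largest_mode_strict_drop[OF mode largest] k(3) by simp
  then show ?thesis
    using tail_less_uniform_share[OF pmf mode _ _ k(3)] sum_uniform_from[of m k B] False by simp
qed

text \<open>The weight \<eta> - expect B f exactly uses up the slack in the expectation, since the
  uniform part raises the expectation by at most its weight.\<close>

lemma tailmass_improvable_if_expect_less:
  assumes "B \<ge> 1" and k: "real k = real B * t" "1 \<le> k" "k \<le> B"
    and "\<eta> < t" and fU: "f \<in> U B" and "expect B f < \<eta>"
  shows "\<exists>h \<in> U_eta B \<eta>. tailmass B t f < tailmass B t h"
proof -
  have pmf: "is_pmf_G B f" and "unimodal B f" using fU unfolding U_def by auto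
  obtain m where mode: "is_mode B f m" and largest: "\<And>m'. is_mode B f m' \<Longrightarrow> m' \<le> m"
    using largest_mode_exists[OF \<open>unimodal B f\<close>] by blast
  have mB: "m \<le> B" using is_mode_le[OF mode] .
  define w where "w = uniform_from B m"
  define l where "l = \<eta> - expect B f"
  define h where "h = mix l f w"
  have "real B * t \<le> real B * 1" using k(3) unfolding k(1)[symmetric] by simp
  then have "t \<le> 1" using \<open>B \<ge> 1\<close> by (simp add: mult_le_cancel_left)
  then have l: "0 < l" "l \<le> 1"
    unfolding l_def using \<open>expect B f < \<eta>\<close> \<open>\<eta> < t\<close> expect_nonneg[OF pmf] by auto
  have wpmf: "is_pmf_G B w" unfolding w_def by (rule is_pmf_G_uniform_from[OF mB])
  have "is_pmf_G B h" unfolding h_def using is_pmf_G_mix[OF pmf wpmf] l by simp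
  moreover have "unimodal B h"
    unfolding h_def w_def unimodal_iff_is_mode
    using is_mode_mix[OF mode is_mode_uniform_from[OF mB], of l] l by auto
  moreover have "expect B h \<le> \<eta>"
  proof -
    have "expect B h = expect B f + l * (expect B w - expect B f)"
      unfolding h_def expect_mix by (simp add: algebra_simps)
    also have "\<dots> \<le> expect B f + l"
      using expect_le_1[OF wpmf] expect_nonneg[OF pmf] l by (simp add: mult_left_le)
    finally show ?thesis unfolding l_def by simp
  qed
  ultimately have "h \<in> U_eta B \<eta>" unfolding U_eta_def U_def by simp
  moreover have "tailmass B t f < tailmass B t h"
  proof -
    have "tailmass B t f < tailmass B t w"
      unfolding tailmass_eq_sum[OF k(1)] w_def
      using tail_less_uniform_from_largest_mode[OF pmf mode largest k \<open>B \<ge> 1\<close>]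
        \<open>expect B f < \<eta>\<close> \<open>\<eta> < t\<close> by simp
    then show ?thesis unfolding h_def tailmass_mix using l by (simp add: algebra_simps)
  qed
  ultimately show ?thesis by blast
qed

subsection \<open>Moving mass to smaller indices\<close>

definition move_mass :: "(nat \<Rightarrow> real) \<Rightarrow> nat \<Rightarrow> nat \<Rightarrow> real \<Rightarrow> nat \<Rightarrow> real" where
  "move_mass f p q d = (\<lambda>i. f i + (if i = p then d else 0) - (if i = q then d else 0))"

lemma sum_weighted_move_mass:
  assumes "finite A"
  shows "(\<Sum>i\<in>A. c i * move_mass f p q d i) = (\<Sum>i\<in>A. c i * f i)
     + (if p \<in> A then c p * d else 0) - (if q \<in> A then c q * d else 0)"
proof -
  have "(\<Sum>i\<in>A. c i * move_mass f p q d i)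
      = (\<Sum>i\<in>A. c i * f i + (if i = p then c p * d else 0) - (if i = q then c q * d else 0))"
    unfolding move_mass_def by (rule sum.cong) (auto simp: algebra_simps)
  then show ?thesis using assms by (simp add: sum.distrib sum_subtractf sum.delta)
qed

lemma is_pmf_G_move_mass:
  assumes "is_pmf_G B f" "p \<le> B" "q \<le> B" "0 \<le> d" "d \<le> f q"
  shows "is_pmf_G B (move_mass f p q d)"
  using assms is_pmf_G_nonneg[OF assms(1)] sum_weighted_move_mass[of "{0..B}" "\<lambda>_. 1" f p q d]
  unfolding is_pmf_G_def move_mass_def by auto

lemma expect_move_mass:
  assumes "p \<le> B" "q \<le> B"
  shows "expect B (move_mass f p q d) = expect B f - (real q - real p) / real B * d"
  using assms sum_weighted_move_mass[of "{0..B}" "\<lambda>i. real i / real B" f p q d]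
  unfolding expect_eq_sum_from_0 by (simp add: algebra_simps diff_divide_distrib)

lemma tailmass_move_mass_same_side:
  assumes "real k = real B * t" "p \<le> q" "q \<le> B" "q < k \<or> k \<le> p"
  shows "tailmass B t (move_mass f p q d) = tailmass B t f"
  using assms sum_weighted_move_mass[of "{k..B}" "\<lambda>_. 1" f p q d]
  unfolding tailmass_eq_sum[OF assms(1)] by auto

locale no_downward_transfer =
  fixes B k :: nat and f :: "nat \<Rightarrow> real"
  assumes pmf: "is_pmf_G B f" and unimodal: "unimodal B f" and k_le_B: "k \<le> B"
    and no_transfer: "\<And>p q d. p < q \<Longrightarrow> q \<le> B \<Longrightarrow> 0 < d \<Longrightarrow> d \<le> f q \<Longrightarrow> q < k \<or> k \<le> p
      \<Longrightarrow> \<not> unimodal B (move_mass f p q d)"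

lemma no_downward_transfer_if_expect_minimal:
  assumes minimal: "\<And>g. g \<in> U B \<Longrightarrow> tailmass B t f \<le> tailmass B t g \<Longrightarrow> expect B f \<le> expect B g"
    and fU: "f \<in> U B" and k: "real k = real B * t" "k \<le> B" and "B \<ge> 1"
  shows "no_downward_transfer B k f"
proof
  show pmf: "is_pmf_G B f" and "unimodal B f" using fU unfolding U_def by auto
  show "k \<le> B" by fact
  fix p q d assume "p < q" "q \<le> B" "0 < d" "d \<le> f q" "q < k \<or> k \<le> p"
  show "\<not> unimodal B (move_mass f p q d)"
  proof
    assume "unimodal B (move_mass f p q d)"
    moreover have "is_pmf_G B (move_mass f p q d)"
      using is_pmf_G_move_mass[OF pmf] \<open>p < q\<close> \<open>q \<le> B\<close> \<open>0 < d\<close> \<open>d \<le> f q\<close> by simp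
    ultimately have "expect B f \<le> expect B (move_mass f p q d)"
      using minimal tailmass_move_mass_same_side[OF k(1)] \<open>p < q\<close> \<open>q \<le> B\<close> \<open>q < k \<or> k \<le> p\<close>
      unfolding U_def by simp
    moreover have "0 < (real q - real p) / real B * d"
      using \<open>p < q\<close> \<open>0 < d\<close> \<open>B \<ge> 1\<close> by simp
    ultimately show False using expect_move_mass \<open>p < q\<close> \<open>q \<le> B\<close> by simp
  qed
qed

context no_downward_transfer
begin

lemma transfer_impossible:
  "p < q \<Longrightarrow> q \<le> B \<Longrightarrow> 0 < d \<Longrightarrow> d \<le> f q \<Longrightarrow> q < k \<or> k \<le> p
    \<Longrightarrow> is_mode B (move_mass f p q d) m \<Longrightarrow> False"
  using no_transfer unimodal_iff_is_mode by blast

lemma nonneg: "0 \<le> f i"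
  using is_pmf_G_nonneg[OF pmf] .

definition iM :: nat where
  "iM = Max (supp_idx B f)"

lemma finite_supp: "finite (supp_idx B f)"
  unfolding supp_idx_def by simp

lemma mode_in_supp: "is_mode B f m \<Longrightarrow> m \<in> supp_idx B f"
  using is_mode_pos[OF pmf] is_mode_le unfolding supp_idx_def by auto

lemma iM_in_supp: "iM \<le> B" "0 < f iM"
proof -
  obtain m where "is_mode B f m" using unimodal unimodal_iff_is_mode by auto
  then have "iM \<in> supp_idx B f"
    unfolding iM_def using Max_in[OF finite_supp] mode_in_supp by auto
  then show "iM \<le> B" "0 < f iM" unfolding supp_idx_def by auto
qed

lemma zero_after_iM:
  assumes "iM < i"
  shows "f i = 0"
proof (cases "i \<le> B")
  case True
  then have "i \<notin> supp_idx B f" using Max_ge[OF finite_supp, of i] assms unfolding iM_def by auto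
  then show ?thesis using True nonneg[of i] unfolding supp_idx_def by simp
qed (use pmf in \<open>simp add: is_pmf_G_def\<close>)

lemma mode_le_iM: "is_mode B f m \<Longrightarrow> m \<le> iM"
  unfolding iM_def using Max_ge[OF finite_supp] mode_in_supp by simp

subsection \<open>A mode at or beyond the threshold\<close>

lemma mode_ge_threshold_eq_iM:
  assumes mode: "is_mode B f m" and "k \<le> m"
  shows "m = iM"
proof (rule ccontr)
  assume "m \<noteq> iM"
  then have "m < iM" using mode_le_iM[OF mode] by simp
  have "is_mode B (move_mass f m iM (f iM)) m"
  proof (rule is_modeI[OF is_mode_le[OF mode]])
    fix i assume "i < m"
    then show "move_mass f m iM (f iM) i \<le> move_mass f m iM (f iM) (Suc i)"
      using is_mode_mono_before[OF mode, of i] \<open>m < iM\<close> iM_in_supp unfolding move_mass_def by auto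
  next
    fix i assume "m \<le> i" "i < B"
    then show "move_mass f m iM (f iM) (Suc i) \<le> move_mass f m iM (f iM) i"
      using is_mode_antimono_after[OF mode, of i] \<open>m < iM\<close> iM_in_supp nonneg[of i] nonneg[of m]
        zero_after_iM[of "Suc i"] zero_after_iM[of i]
      unfolding move_mass_def by auto
  qed
  then show False
    using transfer_impossible \<open>m < iM\<close> iM_in_supp \<open>k \<le> m\<close> by blast
qed

lemma mode_ge_threshold_eq_threshold:
  assumes mode: "is_mode B f m" and "k \<le> m"
  shows "m = k"
proof (rule ccontr)
  assume "m \<noteq> k"
  then have "k < m" using \<open>k \<le> m\<close> by simp
  define d where "d = f m / 2"
  have fm: "0 < f m" using is_mode_pos[OF pmf mode] .
  have after: "f i = 0" if "m < i" for i
    using zero_after_iM that mode_ge_threshold_eq_iM[OF mode \<open>k \<le> m\<close>] by simp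
  have "is_mode B (move_mass f (m - 1) m d) (m - 1)"
  proof (rule is_modeI)
    fix i assume "i < m - 1"
    then have "f i \<le> f (Suc i)" using is_mode_mono_before[OF mode, of i] by simp
    then show "move_mass f (m - 1) m d i \<le> move_mass f (m - 1) m d (Suc i)"
      using fm \<open>i < m - 1\<close> unfolding move_mass_def d_def by auto
  next
    fix i assume "m - 1 \<le> i" "i < B"
    then show "move_mass f (m - 1) m d (Suc i) \<le> move_mass f (m - 1) m d i"
      using fm nonneg[of i] nonneg[of "m - 1"] after[of "Suc i"] \<open>k < m\<close>
      unfolding move_mass_def d_def by auto
  qed (use is_mode_le[OF mode] in simp)
  moreover have "k \<le> m - 1" using \<open>k < m\<close> by simp
  ultimately show False
    using transfer_impossible[of "m - 1" m d] \<open>k < m\<close> is_mode_le[OF mode] fm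
    unfolding d_def by auto
qed

lemma flat_before_threshold:
  assumes mode: "is_mode B f m" and "k \<le> m" and "Suc j < k"
  shows "f j = f (Suc j)"
proof (rule ccontr)
  have "m = k" using mode_ge_threshold_eq_threshold[OF mode \<open>k \<le> m\<close>] .
  assume "f j \<noteq> f (Suc j)"
  then have "f j < f (Suc j)"
    using is_mode_mono_before[OF mode, of j] \<open>m = k\<close> \<open>Suc j < k\<close> by simp
  define d where "d = (f (Suc j) - f j) / 2"
  have d: "0 < d" "2 * d = f (Suc j) - f j" using \<open>f j < f (Suc j)\<close> unfolding d_def by simp_all
  have "is_mode B (move_mass f j (Suc j) d) m"
  proof (rule is_modeI[OF is_mode_le[OF mode]])
    fix i assume "i < m"
    then have "f i \<le> f (Suc i)" by (rule is_mode_mono_before[OF mode])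
    consider "i = j" | "Suc i = j" | "i = Suc j" | "i \<noteq> j" "Suc i \<noteq> j" "i \<noteq> Suc j" by blast
    then show "move_mass f j (Suc j) d i \<le> move_mass f j (Suc j) d (Suc i)"
    proof cases
      case 1
      then show ?thesis using d by (simp add: move_mass_def)
    next
      case 2
      then show ?thesis using d \<open>f i \<le> f (Suc i)\<close> by (simp add: move_mass_def)
    next
      case 3
      then have "f (Suc j) \<le> f (Suc (Suc j))" using \<open>f i \<le> f (Suc i)\<close> by simp
      then show ?thesis using d \<open>i = Suc j\<close> by (simp add: move_mass_def)
    next
      case 4
      then show ?thesis using \<open>f i \<le> f (Suc i)\<close> by (simp add: move_mass_def)
    qed
  next
    fix i assume "m \<le> i" "i < B"
    then have "f (Suc i) \<le> f i" by (rule is_mode_antimono_after[OF mode])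
    then show "move_mass f j (Suc j) d (Suc i) \<le> move_mass f j (Suc j) d i"
      using \<open>m \<le> i\<close> \<open>m = k\<close> \<open>Suc j < k\<close> by (simp add: move_mass_def)
  qed
  then show False
    using transfer_impossible[of j "Suc j" d] d nonneg[of j] \<open>Suc j < k\<close> k_le_B by auto
qed

lemma shape_if_mode_ge_threshold:
  assumes mode: "is_mode B f m" and "k \<le> m"
  shows "iM = k \<and> (\<forall>i. i < iM \<longrightarrow> f i = f 0 \<and> f i \<le> f iM)"
proof -
  have "k = m" "iM = m"
    using mode_ge_threshold_eq_threshold[OF assms] mode_ge_threshold_eq_iM[OF assms] by simp_all
  have "f i = f 0" if "i < k" for i
  proof (rule eq_if_Suc_steps_eq[of 0 k])
    fix j assume "Suc j < k"
    then show "f j = f (Suc j)" using flat_before_threshold[OF mode \<open>k \<le> m\<close>] by blast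
  qed (use that in simp_all)
  moreover have "f i \<le> f m" if "i < k" for i
    using is_mode_max[OF mode, of i] that k_le_B by simp
  ultimately show ?thesis using \<open>k = m\<close> \<open>iM = m\<close> by metis
qed

subsection \<open>All modes before the threshold\<close>

lemma no_rise_before_dropping_mode:
  assumes mode: "is_mode B f (Suc j)" and "Suc j < k" and drop: "f (Suc (Suc j)) < f (Suc j)"
  shows "\<not> f j < f (Suc j)"
proof
  assume rise: "f j < f (Suc j)"
  define d where "d = min (f (Suc j) - f j) (f (Suc j) - f (Suc (Suc j))) / 2"
  have d: "2 * d \<le> f (Suc j) - f j" "2 * d \<le> f (Suc j) - f (Suc (Suc j))" "0 < d"
    using rise drop unfolding d_def by auto
  have "is_mode B (move_mass f j (Suc j) d) (Suc j)"
  proof (rule is_modeI[OF is_mode_le[OF mode]])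
    fix i assume "i < Suc j"
    then show "move_mass f j (Suc j) d i \<le> move_mass f j (Suc j) d (Suc i)"
      using d is_mode_mono_before[OF mode, of i] unfolding move_mass_def by auto
  next
    fix i assume "Suc j \<le> i" "i < B"
    then show "move_mass f j (Suc j) d (Suc i) \<le> move_mass f j (Suc j) d i"
      using d is_mode_antimono_after[OF mode] unfolding move_mass_def by auto
  qed
  then show False
    using transfer_impossible[of j "Suc j" d] d nonneg[of "Suc (Suc j)"] \<open>Suc j < k\<close> k_le_B by auto
qed

lemma no_plateau_before_dropping_mode:
  assumes mode: "is_mode B f (Suc j)" and "Suc j < k" and drop: "f (Suc (Suc j)) < f (Suc j)"
  shows "f j \<noteq> f (Suc j)"
proof
  assume plateau: "f j = f (Suc j)"
  define d where "d = (f (Suc j) - f (Suc (Suc j))) / 2"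
  have d: "2 * d = f (Suc j) - f (Suc (Suc j))" "0 < d" using drop unfolding d_def by simp_all
  have "is_mode B (move_mass f j (Suc j) d) j"
  proof (rule is_modeI)
    fix i assume "i < j"
    then show "move_mass f j (Suc j) d i \<le> move_mass f j (Suc j) d (Suc i)"
      using d is_mode_mono_before[OF mode, of i] unfolding move_mass_def by auto
  next
    fix i assume "j \<le> i" "i < B"
    then show "move_mass f j (Suc j) d (Suc i) \<le> move_mass f j (Suc j) d i"
      using d plateau is_mode_antimono_after[OF mode, of i] unfolding move_mass_def by auto
  qed (use is_mode_le[OF mode] in simp)
  then show False
    using transfer_impossible[of j "Suc j" d] d nonneg[of "Suc (Suc j)"] \<open>Suc j < k\<close> k_le_B by auto
qed

lemma largest_mode_before_threshold_eq_0:
  assumes mode: "is_mode B f m" and largest: "\<And>m'. is_mode B f m' \<Longrightarrow> m' \<le> m" and "m < k"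
  shows "m = 0"
proof (rule ccontr)
  assume "m \<noteq> 0"
  then obtain j where m: "m = Suc j" by (cases m) auto
  have "f (Suc m) < f m" using largest_mode_strict_drop[OF mode largest] \<open>m < k\<close> k_le_B by simp
  then show False
    using no_rise_before_dropping_mode no_plateau_before_dropping_mode
      is_mode_mono_before[OF mode, of j] mode \<open>m < k\<close>
    unfolding m by fastforce
qed

lemma flat_after_1_before_threshold:
  assumes mode: "is_mode B f 0" and "1 \<le> j" "j < k"
  shows "f j = f (Suc j)"
proof (rule ccontr)
  assume "f j \<noteq> f (Suc j)"
  then have "f (Suc j) < f j" using is_mode_antimono_after[OF mode, of j] \<open>j < k\<close> k_le_B by simp
  define d where "d = f j - f (Suc j)"
  have d: "0 < d" "d \<le> f j" using \<open>f (Suc j) < f j\<close> nonneg[of "Suc j"] unfolding d_def by auto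
  have "is_mode B (move_mass f 0 j d) 0"
  proof (rule is_modeI)
    fix i assume "i < B"
    then show "move_mass f 0 j d (Suc i) \<le> move_mass f 0 j d i"
      using is_mode_antimono_after[OF mode, of i] is_mode_antimono_after[OF mode, of 0]
        d \<open>1 \<le> j\<close> unfolding move_mass_def d_def by auto
  qed auto
  then show False using transfer_impossible[of 0 j d] \<open>1 \<le> j\<close> \<open>j < k\<close> k_le_B d by auto
qed

lemma flat_from_threshold_before_iM:
  assumes mode: "is_mode B f 0" and "k \<le> p" "Suc p < iM"
  shows "f p = f (Suc p)"
proof (rule ccontr)
  assume "f p \<noteq> f (Suc p)"
  then have "f (Suc p) < f p"
    using is_mode_antimono_after[OF mode, of p] \<open>Suc p < iM\<close> iM_in_supp by simp
  define d where "d = min (f p - f (Suc p)) (f iM)"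
  have d: "0 < d" "d \<le> f p - f (Suc p)" "d \<le> f iM"
    using \<open>f (Suc p) < f p\<close> iM_in_supp unfolding d_def by auto
  have "is_mode B (move_mass f (Suc p) iM d) 0"
  proof (rule is_modeI)
    fix i assume "i < B"
    then have decr: "f (Suc i) \<le> f i" by (rule is_mode_antimono_after[OF mode, simplified])
    consider "i = p" | "i = Suc p" | "Suc i = iM" "i \<noteq> Suc p" | "i = iM"
      | "i \<noteq> p" "i \<noteq> Suc p" "Suc i \<noteq> iM" "i \<noteq> iM" by blast
    then show "move_mass f (Suc p) iM d (Suc i) \<le> move_mass f (Suc p) iM d i"
    proof cases
      case 2
      then show ?thesis using d decr \<open>Suc p < iM\<close> by (cases "Suc (Suc p) = iM") (simp_all add: move_mass_def)
    next
      case 4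
      then show ?thesis using d zero_after_iM[of "Suc i"] \<open>Suc p < iM\<close> by (simp add: move_mass_def)
    qed (use d decr \<open>Suc p < iM\<close> in \<open>simp_all add: move_mass_def\<close>)
  qed auto
  then show False
    using transfer_impossible[of "Suc p" iM d] \<open>k \<le> p\<close> \<open>Suc p < iM\<close> iM_in_supp d by auto
qed

lemma shape_if_modes_before_threshold:
  assumes "\<And>m. is_mode B f m \<Longrightarrow> m < k"
  shows "f 1 < f 0 \<and> (\<forall>i. 1 \<le> i \<and> i < iM \<longrightarrow> f i = f 1 \<and> f iM \<le> f i)"
proof -
  obtain m where mode: "is_mode B f m" and largest: "\<And>m'. is_mode B f m' \<Longrightarrow> m' \<le> m"
    using largest_mode_exists[OF unimodal] by blast
  have "m < k" using assms[OF mode] .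
  then have "m = 0" using largest_mode_before_threshold_eq_0[OF mode largest] by simp
  then have mode0: "is_mode B f 0" using mode by simp
  have "f 1 < f 0" using largest_mode_strict_drop[OF mode largest] \<open>m = 0\<close> \<open>m < k\<close> k_le_B by simp
  have step: "f j = f (Suc j)" if "1 \<le> j" "Suc j < iM" for j
  proof (cases "j < k")
    case True
    then show ?thesis using flat_after_1_before_threshold[OF mode0] that(1) by blast
  next
    case False
    then show ?thesis using flat_from_threshold_before_iM[OF mode0] that(2) by simp
  qed
  have "f i = f 1" if "1 \<le> i" "i < iM" for i
    using eq_if_Suc_steps_eq[of 1 iM f, OF step] that by blast
  moreover have "f iM \<le> f i" if "i < iM" for i
    using mode0 that iM_in_supp unfolding is_mode_def by auto
  ultimately show ?thesis using \<open>f 1 < f 0\<close> by blast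
qed

lemma shape:
  "(f 1 < f 0 \<and> (\<forall>i. 1 \<le> i \<and> i < iM \<longrightarrow> f i = f 1 \<and> f iM \<le> f i))
   \<or> (iM = k \<and> (\<forall>i. i < iM \<longrightarrow> f i = f 0 \<and> f i \<le> f iM))"
proof (cases "\<exists>m. is_mode B f m \<and> k \<le> m")
  case True
  then show ?thesis using shape_if_mode_ge_threshold by blast
next
  case False
  then have "\<And>m. is_mode B f m \<Longrightarrow> m < k" by (meson not_le)
  then show ?thesis using shape_if_modes_before_threshold by blast
qed

end

theorem proposition4:
  fixes B :: nat and t \<eta> :: real and f :: "nat \<Rightarrow> real"
  assumes "B \<ge> 1"
    and "t \<in> grid B"
    and "0 < \<eta>" and "\<eta> < t"
    and "f \<in> U_eta B \<eta>"
    and "\<forall>g \<in> U_eta B \<eta>. tailmass B t g \<le> tailmass B t f"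
  shows "expect B f = \<eta> \<and>
    (let iM = Max (supp_idx B f) in
      (f 0 > f 1 \<and> (\<forall>i. 1 \<le> i \<and> i < iM \<longrightarrow> f i = f 1 \<and> f iM \<le> f i))
      \<or>
      (real iM = real B * t \<and> (\<forall>i. i < iM \<longrightarrow> f i = f 0 \<and> f i \<le> f iM)))"
proof -
  obtain k where "k \<le> B" and t: "t = real k / real B"
    using assms(2) unfolding grid_def by auto
  have "k \<noteq> 0" using t assms(3,4) by (cases "k = 0") auto
  then have k: "real k = real B * t" "1 \<le> k" using t assms(1) by auto
  have fU: "f \<in> U B" and "expect B f \<le> \<eta>" using assms(5) unfolding U_eta_def by auto
  note improvable = tailmass_improvable_if_expect_less[OF assms(1) k \<open>k \<le> B\<close> assms(4)]
  have E: "expect B f = \<eta>"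
    using improvable[OF fU] assms(6) \<open>expect B f \<le> \<eta>\<close> by force
  have "expect B f \<le> expect B g" if "g \<in> U B" "tailmass B t f \<le> tailmass B t g" for g
    using improvable[OF that(1)] assms(6) that(2) E by force
  then interpret no_downward_transfer B k f
    using no_downward_transfer_if_expect_minimal fU k(1) \<open>k \<le> B\<close> assms(1) by blast
  show ?thesis using E shape k(1) unfolding iM_def Let_def by auto
qed

end
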